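(* Let $C$ be a consistent conjunctive transition formula of dimension $n$. Then $\hat\alpha(C)$ is a $\mathbb{Q}$-VASR abstraction of $C$ (i.e., if $\hat\alpha(C)=(S,V)$ then $C\Vdash_S V$). If moreover $C$ is expressed in $\exists$LRA, then $\hat\alpha(C)$ is a best $\mathbb{Q}$-VASR abstraction of $C$.
   Context: $\exists$LIRA formulas are built from atoms $s<t$, $s=t$ over linear terms with rational coefficients using $\land,\lor,\exists x\in\mathbb{Q},\exists x\in\mathbb{Z}$; $\exists$LRA omits quantification over $\mathbb{Z}$. A transition formula of dimension $n$ is a formula $F(\vec x,\vec x')$ with free variables $x_1,\dots,x_n,x_1',\dots,x_n'$, defining the transition system on $\mathbb{Q}^n$ with $\vec u\to_F\vec v$ iff $F(\vec u,\vec v)$ holds. A conjunctive transition formula is one that is a conjunction of atoms (possibly with additional existentially quantified variables); consistent means satisfiable. A $\mathbb{Q}$-VASR of dimension $d$ is a finite set $V\subseteq\{0,1\}^d\times\mathbb{Q}^d$; $\vec u\to_V\vec v$ iff $\vec v=\vec r*\vec u+\vec a$ for some $(\vec r,\vec a)\in V$ ($*$ pointwise product). A linear simulation $A\Vdash_S B$ between transition systems on $\mathbb{Q}^n$ and $\mathbb{Q}^m$ is $S\in\mathbb{Q}^{m\times n}$ with $\vec u\to_A\vec v\Rightarrow S\vec u\to_B S\vec v$. A $\mathbb{Q}$-VASR abstraction is a pair $(S,V)$ with $S\in\mathbb{Q}^{d\times n}$ and $V$ a $d$-dimensional $\mathbb{Q}$-VASR; it is an abstraction of $F$ if $F\Vdash_SV$.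 $(S^1,V^1)\preceq(S^2,V^2)$ iff there is a matrix $T$ with $V^1\Vdash_TV^2$ and $TS^1=S^2$. A best $\mathbb{Q}$-VASR abstraction of $F$ is an abstraction of $F$ that is $\preceq$ every $\mathbb{Q}$-VASR abstraction of $F$. $\hat\alpha(C)$: let $\mathit{Res}_C=\{(\vec s,a)\in\mathbb{Q}^n\times\mathbb{Q}: C\models\vec s\cdot\vec x'=a\}$ and $\mathit{Inc}_C=\{(\vec s,a): C\models\vec s\cdot\vec x'=\vec s\cdot\vec x+a\}$ (both vector spaces). With chosen bases $(\vec s_1,a_1),\dots,(\vec s_m,a_m)$ of $\mathit{Res}_C$ and $(\vec s_{m+1},a_{m+1}),\dots,(\vec s_d,a_d)$ of $\mathit{Inc}_C$, $\hat\alpha(C)=(S,\{(\vec r,\vec a)\})$ where $S\in\mathbb{Q}^{d\times n}$ has rows $\vec s_1,\dots,\vec s_d$, $\vec r$ consists of $m$ zeros followed by $d-m$ ones, and $\vec a=(a_1,\dots,a_d)$. *)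

theory Defs
  imports "Jordan_Normal_Form.Matrix"
begin

text \<open>A linear atom over a variable vector w: either  c . w < k  or  c . w = k.
  (Every atom s < t / s = t between linear terms with rational coefficients
  is of this form after moving everything to one side.)\<close>
datatype latom = Lt "rat vec" rat | Eq "rat vec" rat

fun atom_holds :: "latom \<Rightarrow> rat vec \<Rightarrow> bool" where
  "atom_holds (Lt c k) w = (c \<bullet> w < k)"
| "atom_holds (Eq c k) w = (c \<bullet> w = k)"

fun atom_coeffs :: "latom \<Rightarrow> rat vec" where
  "atom_coeffs (Lt c k) = c"
| "atom_coeffs (Eq c k) = c"

text \<open>A conjunctive transition formula of dimension n:
  exists y in Q^p, z in Z^q.  /\ atoms (x @ x' @ y @ z).\<close>
record ctf =
  ctf_dim :: nat
  ctf_p :: nat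
  ctf_q :: nat
  ctf_atoms :: "latom list"

definition ctf_wf :: "ctf \<Rightarrow> bool" where
  "ctf_wf C \<longleftrightarrow> (\<forall>\<phi>\<in>set (ctf_atoms C).
      atom_coeffs \<phi> \<in> carrier_vec (2 * ctf_dim C + ctf_p C + ctf_q C))"

definition ctf_rel :: "ctf \<Rightarrow> rat vec \<Rightarrow> rat vec \<Rightarrow> bool" where
  "ctf_rel C u v \<longleftrightarrow> u \<in> carrier_vec (ctf_dim C) \<and> v \<in> carrier_vec (ctf_dim C) \<and>
     (\<exists>y z. y \<in> carrier_vec (ctf_p C) \<and> z \<in> carrier_vec (ctf_q C) \<and>
        (\<forall>i<ctf_q C. z $ i \<in> \<int>) \<and>
        (\<forall>\<phi>\<in>set (ctf_atoms C). atom_holds \<phi> (u @\<^sub>v v @\<^sub>v y @\<^sub>v z)))"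

definition ctf_consistent :: "ctf \<Rightarrow> bool" where
  "ctf_consistent C \<longleftrightarrow> (\<exists>u v. ctf_rel C u v)"

text \<open>Expressed in existential LRA: no integer-quantified variables.\<close>
definition ctf_is_LRA :: "ctf \<Rightarrow> bool" where
  "ctf_is_LRA C \<longleftrightarrow> ctf_q C = 0"

definition is_qvasr :: "nat \<Rightarrow> (rat vec \<times> rat vec) set \<Rightarrow> bool" where
  "is_qvasr d V \<longleftrightarrow> finite V \<and> (\<forall>(r, a)\<in>V. r \<in> carrier_vec d \<and> a \<in> carrier_vec d \<and>
      (\<forall>i<d. r $ i = 0 \<or> r $ i = 1))"

definition vasr_step :: "nat \<Rightarrow> (rat vec \<times> rat vec) set \<Rightarrow> rat vec \<Rightarrow> rat vec \<Rightarrow> bool" where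
  "vasr_step d V u v \<longleftrightarrow> u \<in> carrier_vec d \<and>
     (\<exists>(r, a)\<in>V. v = vec d (\<lambda>i. r $ i * u $ i) + a)"

definition lin_sim :: "nat \<Rightarrow> nat \<Rightarrow> rat mat \<Rightarrow> (rat vec \<Rightarrow> rat vec \<Rightarrow> bool)
    \<Rightarrow> (rat vec \<Rightarrow> rat vec \<Rightarrow> bool) \<Rightarrow> bool" where
  "lin_sim m n S A B \<longleftrightarrow> S \<in> carrier_mat m n \<and> (\<forall>u v. A u v \<longrightarrow> B (S *\<^sub>v u) (S *\<^sub>v v))"

definition qvasr_abstraction :: "nat \<Rightarrow> (rat vec \<Rightarrow> rat vec \<Rightarrow> bool)
    \<Rightarrow> nat \<Rightarrow> rat mat \<Rightarrow> (rat vec \<times> rat vec) set \<Rightarrow> bool" where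
  "qvasr_abstraction n F d S V \<longleftrightarrow> S \<in> carrier_mat d n \<and> is_qvasr d V \<and> lin_sim d n S F (vasr_step d V)"

definition abs_le :: "nat \<Rightarrow> rat mat \<Rightarrow> (rat vec \<times> rat vec) set
    \<Rightarrow> nat \<Rightarrow> rat mat \<Rightarrow> (rat vec \<times> rat vec) set \<Rightarrow> bool" where
  "abs_le d1 S1 V1 d2 S2 V2 \<longleftrightarrow>
     (\<exists>T. lin_sim d2 d1 T (vasr_step d1 V1) (vasr_step d2 V2) \<and> T * S1 = S2)"

definition best_qvasr_abstraction :: "nat \<Rightarrow> (rat vec \<Rightarrow> rat vec \<Rightarrow> bool)
    \<Rightarrow> nat \<Rightarrow> rat mat \<Rightarrow> (rat vec \<times> rat vec) set \<Rightarrow> bool" where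
  "best_qvasr_abstraction n F d S V \<longleftrightarrow> qvasr_abstraction n F d S V \<and>
     (\<forall>d' S' V'. qvasr_abstraction n F d' S' V' \<longrightarrow> abs_le d S V d' S' V')"

definition Res :: "ctf \<Rightarrow> (rat vec \<times> rat) set" where
  "Res C = {(s, a). s \<in> carrier_vec (ctf_dim C) \<and> (\<forall>u v. ctf_rel C u v \<longrightarrow> s \<bullet> v = a)}"

definition Inc :: "ctf \<Rightarrow> (rat vec \<times> rat) set" where
  "Inc C = {(s, a). s \<in> carrier_vec (ctf_dim C) \<and> (\<forall>u v. ctf_rel C u v \<longrightarrow> s \<bullet> v = s \<bullet> u + a)}"

definition is_basis_of :: "nat \<Rightarrow> (rat vec \<times> rat) set \<Rightarrow> (rat vec \<times> rat) list \<Rightarrow> bool" where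
  "is_basis_of n X bs \<longleftrightarrow> set bs \<subseteq> X \<and>
     (\<forall>c::nat \<Rightarrow> rat.
        (\<forall>j<n. (\<Sum>i<length bs. c i * fst (bs ! i) $ j) = 0) \<and>
        (\<Sum>i<length bs. c i * snd (bs ! i)) = 0 \<longrightarrow> (\<forall>i<length bs. c i = 0)) \<and>
     (\<forall>(s, a)\<in>X. \<exists>c::nat \<Rightarrow> rat.
        (\<forall>j<n. s $ j = (\<Sum>i<length bs. c i * fst (bs ! i) $ j)) \<and>
        a = (\<Sum>i<length bs. c i * snd (bs ! i)))"

text \<open>(d, S, V) is a value of alpha-hat(C) for some choice of bases.\<close>
definition alpha_hat :: "ctf \<Rightarrow> nat \<Rightarrow> rat mat \<Rightarrow> (rat vec \<times> rat vec) set \<Rightarrow> bool" where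
  "alpha_hat C d S V \<longleftrightarrow> (\<exists>bR bI.
     is_basis_of (ctf_dim C) (Res C) bR \<and> is_basis_of (ctf_dim C) (Inc C) bI \<and>
     d = length bR + length bI \<and>
     S = mat_of_rows (ctf_dim C) (map fst (bR @ bI)) \<and>
     V = {(vec d (\<lambda>i. if i < length bR then 0 else 1), vec_of_list (map snd (bR @ bI)))})"

end

theory Submission
  imports Defs
begin

(* The rows of S are functionals that every transition of C resets to, or increments by, a
   constant, so (S, V) simulates C.  For optimality let (S', V') be any Q-VASR abstraction.  In
   existential LRA the transition relation of C is convex, and for each transition t of V' the
   transitions of C that t simulates are closed under lines through any two of them; a nonempty
   convex set covered by finitely many such sets lies in one of them, so a single transition
   (r', a') of V' simulates all of C.  Row i of S' together with a'_i is then a reset functional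
   (r'_i = 0) or an increment functional (r'_i = 1), i.e. it lies in Res C or Inc C, and its
   coordinates in the chosen basis form row i of a matrix T with T S = S' simulating V by V'. *)

lemma sum_lessThan_add:
  "(\<Sum>k<m + l. g k) = (\<Sum>k<m. g k) + (\<Sum>k<l. g (m + k))" for m l :: nat
  by (induction l) (simp_all add: add_ac)

lemma affine_zero_at_two_points:
  fixes x y :: "'a::field"
  assumes "(1 - s) * x + s * y = 0" and "(1 - t) * x + t * y = 0" and "s \<noteq> t"
  shows "(1 - u) * x + u * y = 0"
proof -
  have "(t - s) * (y - x) = ((1 - t) * x + t * y) - ((1 - s) * x + s * y)"
    by (simp add: algebra_simps)
  then have "(t - s) * (y - x) = 0"
    using assms(1,2) by simp
  then have "y = x"
    using assms(3) by simp
  with assms(1) show ?thesis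
    by (simp add: algebra_simps)
qed

context
  fixes K :: "'x set" and line :: "'x \<Rightarrow> 'x \<Rightarrow> 'r::linordered_field \<Rightarrow> 'x"
    and A :: "'j \<Rightarrow> 'x \<Rightarrow> bool"
  assumes line_in: "\<And>p q t. p \<in> K \<Longrightarrow> q \<in> K \<Longrightarrow> 0 \<le> t \<Longrightarrow> t \<le> 1 \<Longrightarrow> line p q t \<in> K"
    and line_0: "\<And>p q. p \<in> K \<Longrightarrow> q \<in> K \<Longrightarrow> line p q 0 = p"
    and line_1: "\<And>p q. p \<in> K \<Longrightarrow> q \<in> K \<Longrightarrow> line p q 1 = q"
    and line_closed: "\<And>j p q s t u. p \<in> K \<Longrightarrow> q \<in> K \<Longrightarrow> s \<noteq> t \<Longrightarrow>
      A j (line p q s) \<Longrightarrow> A j (line p q t) \<Longrightarrow> A j (line p q u)"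
begin

lemma finite_line_closed_cover_pair:
  assumes "finite J" and cover: "\<forall>x\<in>K. \<exists>j\<in>J. A j x" and "p \<in> K" "q \<in> K"
  shows "\<exists>j\<in>J. A j p \<and> A j q"
proof -
  have "\<forall>t\<in>{0..1}. \<exists>j\<in>J. A j (line p q t)"
    using cover line_in[OF \<open>p \<in> K\<close> \<open>q \<in> K\<close>] by simp
  then obtain g where g: "\<And>t. t \<in> {0..1} \<Longrightarrow> g t \<in> J \<and> A (g t) (line p q t)"
    by metis
  have "\<not> inj_on g {0..1}"
  proof
    assume "inj_on g {0..1}"
    moreover have "finite (g ` {0..1})"
      using g \<open>finite J\<close> by (meson finite_subset image_subsetI)
    ultimately show False
      using finite_imageD infinite_Icc[of "0::'r" 1] by auto
  qed
  then obtain s t where "s \<in> {0..1}" "t \<in> {0..1}" "s \<noteq> t" "g s = g t"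
    unfolding inj_on_def by blast
  with g have "g s \<in> J" "A (g s) (line p q s)" "A (g s) (line p q t)"
    by metis+
  with \<open>s \<noteq> t\<close> have "A (g s) (line p q 0)" "A (g s) (line p q 1)"
    using line_closed[OF \<open>p \<in> K\<close> \<open>q \<in> K\<close>] by blast+
  with \<open>g s \<in> J\<close> show ?thesis
    using line_0 line_1 \<open>p \<in> K\<close> \<open>q \<in> K\<close> by metis
qed

lemma finite_line_closed_cover_single:
  assumes "finite J" and "K \<noteq> {}" and "\<forall>x\<in>K. \<exists>j\<in>J. A j x"
  shows "\<exists>j\<in>J. \<forall>x\<in>K. A j x"
  using assms(1,3)
proof (induction J rule: finite_induct)
  case empty
  with \<open>K \<noteq> {}\<close> show ?case by auto
next
  case (insert k J)
  show ?case
  proof (cases "\<forall>x\<in>K. A k x")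
    case False
    then obtain p where "p \<in> K" "\<not> A k p" by auto
    have "\<forall>q\<in>K. \<exists>j\<in>J. A j q"
      using finite_line_closed_cover_pair[OF _ insert.prems \<open>p \<in> K\<close>] insert.hyps(1) \<open>\<not> A k p\<close>
      by blast
    with insert.IH show ?thesis by blast
  qed blast
qed

end

definition affine_comb :: "'a::comm_ring_1 \<Rightarrow> 'a vec \<Rightarrow> 'a vec \<Rightarrow> 'a vec" where
  "affine_comb t v w = (1 - t) \<cdot>\<^sub>v v + t \<cdot>\<^sub>v w"

lemma affine_comb_carrier [simp]:
  "v \<in> carrier_vec n \<Longrightarrow> w \<in> carrier_vec n \<Longrightarrow> affine_comb t v w \<in> carrier_vec n"
  by (simp add: affine_comb_def)

lemma affine_comb_index [simp]:
  "v \<in> carrier_vec n \<Longrightarrow> w \<in> carrier_vec n \<Longrightarrow> i < n \<Longrightarrow>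
    affine_comb t v w $ i = (1 - t) * v $ i + t * w $ i"
  by (simp add: affine_comb_def)

lemma affine_comb_0 [simp]: "v \<in> carrier_vec n \<Longrightarrow> w \<in> carrier_vec n \<Longrightarrow> affine_comb 0 v w = v"
  by (auto simp: affine_comb_def)

lemma affine_comb_1 [simp]: "v \<in> carrier_vec n \<Longrightarrow> w \<in> carrier_vec n \<Longrightarrow> affine_comb 1 v w = w"
  by (auto simp: affine_comb_def)

lemma affine_comb_append:
  assumes "dim_vec v = dim_vec w" "dim_vec v' = dim_vec w'"
  shows "affine_comb t (v @\<^sub>v v') (w @\<^sub>v w') = affine_comb t v w @\<^sub>v affine_comb t v' w'"
  using assms by (intro eq_vecI) (auto simp: affine_comb_def)

lemma scalar_prod_affine_comb:
  assumes "c \<in> carrier_vec n" "v \<in> carrier_vec n" "w \<in> carrier_vec n"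
  shows "c \<bullet> affine_comb t v w = (1 - t) * (c \<bullet> v) + t * (c \<bullet> w)"
  using assms by (simp add: affine_comb_def scalar_prod_add_distrib[of _ n])

lemma mult_mat_vec_affine_comb:
  fixes A :: "'a::field mat"
  assumes "A \<in> carrier_mat m n" "v \<in> carrier_vec n" "w \<in> carrier_vec n"
  shows "A *\<^sub>v affine_comb t v w = affine_comb t (A *\<^sub>v v) (A *\<^sub>v w)"
  using assms by (simp add: affine_comb_def mult_add_distrib_mat_vec[of _ m n] mult_mat_vec)

lemma vasr_step_singleton_iff:
  "vasr_step d {(r, a)} x y \<longleftrightarrow> x \<in> carrier_vec d \<and> y = vec d (\<lambda>i. r $ i * x $ i) + a"
  by (simp add: vasr_step_def)

lemma vasr_step_singleton_index:
  assumes "vasr_step d {(r, a)} x y" and "y \<in> carrier_vec d" and "i < d"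
  shows "y $ i = r $ i * x $ i + a $ i"
proof -
  from assms(1) have y: "y = vec d (\<lambda>i. r $ i * x $ i) + a"
    by (simp add: vasr_step_singleton_iff)
  with assms(2) have "dim_vec a = d"
    by (metis carrier_vecD index_add_vec(2))
  with y \<open>i < d\<close> show ?thesis
    by simp
qed

lemma lin_sim_singleton_row:
  assumes "lin_sim d n S F (vasr_step d {(r, a)})" and "F u v" and "i < d"
  shows "row S i \<bullet> v = r $ i * (row S i \<bullet> u) + a $ i"
proof -
  have S: "S \<in> carrier_mat d n"
    using assms(1) by (simp add: lin_sim_def)
  have "vasr_step d {(r, a)} (S *\<^sub>v u) (S *\<^sub>v v)"
    using assms(1,2) by (simp add: lin_sim_def)
  moreover have "S *\<^sub>v v \<in> carrier_vec d"
    using S by (intro carrier_vecI) simp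
  ultimately have "(S *\<^sub>v v) $ i = r $ i * (S *\<^sub>v u) $ i + a $ i"
    by (rule vasr_step_singleton_index[OF _ _ \<open>i < d\<close>])
  with S \<open>i < d\<close> show ?thesis
    by simp
qed

lemma vasr_step_singletonE:
  assumes "vasr_step d V x y"
  obtains t where "t \<in> V" "vasr_step d {t} x y"
  using assms by (auto simp: vasr_step_def)

lemma vasr_step_singleton_line_closed:
  assumes xy: "x \<in> carrier_vec d" "y \<in> carrier_vec d" "x' \<in> carrier_vec d" "y' \<in> carrier_vec d"
    and "vasr_step d {(r, a)} (affine_comb s x x') (affine_comb s y y')"
    and "vasr_step d {(r, a)} (affine_comb t x x') (affine_comb t y y')" and "s \<noteq> t"
  shows "vasr_step d {(r, a)} (affine_comb u x x') (affine_comb u y y')"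
proof -
  from assms(5) have "affine_comb s y y' = vec d (\<lambda>i. r $ i * affine_comb s x x' $ i) + a"
    by (simp add: vasr_step_singleton_iff)
  then have "a \<in> carrier_vec d"
    using xy by (metis affine_comb_carrier carrier_vecD carrier_vecI index_add_vec(2))
  define e where "e i = y $ i - r $ i * x $ i - a $ i" for i
  define e' where "e' i = y' $ i - r $ i * x' $ i - a $ i" for i
  have residual: "(1 - \<tau>) * e i + \<tau> * e' i =
      ((1 - \<tau>) * y $ i + \<tau> * y' $ i) - (r $ i * ((1 - \<tau>) * x $ i + \<tau> * x' $ i) + a $ i)" for \<tau> i
    unfolding e_def e'_def by (simp add: algebra_simps)
  have step_iff: "vasr_step d {(r, a)} (affine_comb \<tau> x x') (affine_comb \<tau> y y') \<longleftrightarrow>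
      (\<forall>i<d. (1 - \<tau>) * e i + \<tau> * e' i = 0)" for \<tau>
    using xy \<open>a \<in> carrier_vec d\<close> by (auto simp: vasr_step_singleton_iff vec_eq_iff residual)
  show ?thesis
    using assms(5,6) \<open>s \<noteq> t\<close> affine_zero_at_two_points unfolding step_iff by blast
qed

lemma vasr_step_singleton_image_line_closed:
  assumes S: "S \<in> carrier_mat d n"
    and xy: "x \<in> carrier_vec n" "y \<in> carrier_vec n" "x' \<in> carrier_vec n" "y' \<in> carrier_vec n"
    and "vasr_step d {t} (S *\<^sub>v affine_comb s x x') (S *\<^sub>v affine_comb s y y')"
    and "vasr_step d {t} (S *\<^sub>v affine_comb s' x x') (S *\<^sub>v affine_comb s' y y')" and "s \<noteq> s'"
  shows "vasr_step d {t} (S *\<^sub>v affine_comb u x x') (S *\<^sub>v affine_comb u y y')"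
proof -
  obtain r a where t: "t = (r, a)"
    by fastforce
  have image: "S *\<^sub>v w \<in> carrier_vec d" for w
    using S by (intro carrier_vecI) simp
  from assms(6-8) show ?thesis
    unfolding t mult_mat_vec_affine_comb[OF S xy(1,3)] mult_mat_vec_affine_comb[OF S xy(2,4)]
    by (rule vasr_step_singleton_line_closed[OF image image image image])
qed

lemma lin_sim_vasr_singleton:
  assumes T: "T \<in> carrier_mat d' d" and a: "a \<in> carrier_vec d"
    and "(r', a') \<in> V'" and a': "a' \<in> carrier_vec d'"
    and offset: "\<And>i. i < d' \<Longrightarrow> row T i \<bullet> a = a' $ i"
    and support: "\<And>i k. i < d' \<Longrightarrow> k < d \<Longrightarrow> T $$ (i, k) * r $ k = r' $ i * T $$ (i, k)"
  shows "lin_sim d' d T (vasr_step d {(r, a)}) (vasr_step d' V')"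
proof -
  have "vasr_step d' V' (T *\<^sub>v u) (T *\<^sub>v v)" if "vasr_step d {(r, a)} u v" for u v
  proof -
    from that have u: "u \<in> carrier_vec d" and v: "v = vec d (\<lambda>k. r $ k * u $ k) + a"
      by (simp_all add: vasr_step_singleton_iff)
    have scaled: "row T i \<bullet> vec d (\<lambda>k. r $ k * u $ k) = r' $ i * (row T i \<bullet> u)" if "i < d'" for i
    proof -
      have "row T i \<bullet> vec d (\<lambda>k. r $ k * u $ k) = (\<Sum>k<d. T $$ (i, k) * (r $ k * u $ k))"
        using T u that by (simp add: scalar_prod_def atLeast0LessThan)
      also have "\<dots> = (\<Sum>k<d. r' $ i * (T $$ (i, k) * u $ k))"
      proof (rule sum.cong[OF refl])
        fix k assume "k \<in> {..<d}"
        with support[OF that, of k] show "T $$ (i, k) * (r $ k * u $ k) = r' $ i * (T $$ (i, k) * u $ k)"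
          by (metis lessThan_iff mult.assoc)
      qed
      also have "\<dots> = r' $ i * (row T i \<bullet> u)"
        using T u that by (simp add: scalar_prod_def atLeast0LessThan sum_distrib_left)
      finally show ?thesis .
    qed
    have "T *\<^sub>v v = vec d' (\<lambda>i. r' $ i * (T *\<^sub>v u) $ i) + a'"
    proof (rule eq_vecI)
      fix i assume "i < dim_vec (vec d' (\<lambda>i. r' $ i * (T *\<^sub>v u) $ i) + a')"
      then have i: "i < d'"
        using a' by simp
      have "(T *\<^sub>v v) $ i = row T i \<bullet> vec d (\<lambda>k. r $ k * u $ k) + row T i \<bullet> a"
        using T i a unfolding v by (simp add: scalar_prod_add_distrib[of _ d])
      then show "(T *\<^sub>v v) $ i = (vec d' (\<lambda>i. r' $ i * (T *\<^sub>v u) $ i) + a') $ i"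
        using T i a' by (simp add: scaled offset)
    qed (use T a' in simp)
    with \<open>(r', a') \<in> V'\<close> T show ?thesis
      unfolding vasr_step_def by (auto intro: carrier_vecI)
  qed
  with T show ?thesis
    by (simp add: lin_sim_def)
qed

definition has_coords :: "nat \<Rightarrow> (rat vec \<times> rat) list \<Rightarrow> (nat \<Rightarrow> rat) \<Rightarrow> rat vec \<times> rat \<Rightarrow> bool" where
  "has_coords n bs c p \<longleftrightarrow>
     (\<forall>j<n. fst p $ j = (\<Sum>k<length bs. c k * fst (bs ! k) $ j)) \<and>
     snd p = (\<Sum>k<length bs. c k * snd (bs ! k))"

lemma is_basis_of_has_coords:
  assumes "is_basis_of n X bs" and "(s, a) \<in> X"
  shows "\<exists>c. has_coords n bs c (s, a)"
proof -
  have "\<forall>(s, a)\<in>X. \<exists>c. (\<forall>j<n. s $ j = (\<Sum>k<length bs. c k * fst (bs ! k) $ j)) \<and>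
      a = (\<Sum>k<length bs. c k * snd (bs ! k))"
    using assms(1) unfolding is_basis_of_def by (elim conjE)
  from bspec[OF this assms(2)] show ?thesis
    unfolding has_coords_def by simp
qed

lemma has_coords_append_left:
  "has_coords n xs c p \<Longrightarrow> has_coords n (xs @ ys) (\<lambda>k. if k < length xs then c k else 0) p"
  unfolding has_coords_def by (simp add: sum_lessThan_add nth_append)

lemma has_coords_append_right:
  "has_coords n ys c p \<Longrightarrow> has_coords n (xs @ ys) (\<lambda>k. if k < length xs then 0 else c (k - length xs)) p"
  unfolding has_coords_def by (simp add: sum_lessThan_add nth_append)

lemma atom_holds_affine_comb:
  assumes "atom_coeffs \<phi> \<in> carrier_vec n" "w \<in> carrier_vec n" "w' \<in> carrier_vec n"
    and "atom_holds \<phi> w" "atom_holds \<phi> w'" and "0 \<le> t" "t \<le> 1"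
  shows "atom_holds \<phi> (affine_comb t w w')"
proof -
  have "(1 - t) * x + t * x = x" for x :: rat
    by (simp add: algebra_simps)
  with assms show ?thesis
    by (cases \<phi>) (auto simp: scalar_prod_affine_comb[of _ n] intro: convex_bound_lt)
qed

lemma ctf_rel_affine_comb:
  assumes "ctf_wf C" "ctf_is_LRA C" and "ctf_rel C u v" "ctf_rel C u' v'" and "0 \<le> t" "t \<le> 1"
  shows "ctf_rel C (affine_comb t u u') (affine_comb t v v')"
proof -
  let ?n = "ctf_dim C" and ?p = "ctf_p C" and ?q = "ctf_q C"
  obtain y z where y: "y \<in> carrier_vec ?p" and z: "z \<in> carrier_vec ?q"
    and holds: "\<forall>\<phi>\<in>set (ctf_atoms C). atom_holds \<phi> (u @\<^sub>v v @\<^sub>v y @\<^sub>v z)"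
    using \<open>ctf_rel C u v\<close> unfolding ctf_rel_def by blast
  obtain y' z' where y': "y' \<in> carrier_vec ?p" and z': "z' \<in> carrier_vec ?q"
    and holds': "\<forall>\<phi>\<in>set (ctf_atoms C). atom_holds \<phi> (u' @\<^sub>v v' @\<^sub>v y' @\<^sub>v z')"
    using \<open>ctf_rel C u' v'\<close> unfolding ctf_rel_def by blast
  have uv: "u \<in> carrier_vec ?n" "v \<in> carrier_vec ?n" "u' \<in> carrier_vec ?n" "v' \<in> carrier_vec ?n"
    using assms(3,4) unfolding ctf_rel_def by auto
  have "?n + (?n + (?p + ?q)) = 2 * ?n + ?p + ?q"
    by simp
  then have dims: "u @\<^sub>v v @\<^sub>v y @\<^sub>v z \<in> carrier_vec (2 * ?n + ?p + ?q)"
    "u' @\<^sub>v v' @\<^sub>v y' @\<^sub>v z' \<in> carrier_vec (2 * ?n + ?p + ?q)"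
    using uv y y' z z' by (metis append_carrier_vec)+
  let ?comb = "\<lambda>a b. affine_comb t a b"
  have comb_append: "?comb (u @\<^sub>v v @\<^sub>v y @\<^sub>v z) (u' @\<^sub>v v' @\<^sub>v y' @\<^sub>v z') =
      ?comb u u' @\<^sub>v ?comb v v' @\<^sub>v ?comb y y' @\<^sub>v ?comb z z'"
    using uv y y' z z' by (simp add: affine_comb_append)
  have "atom_holds \<phi> (?comb u u' @\<^sub>v ?comb v v' @\<^sub>v ?comb y y' @\<^sub>v ?comb z z')"
    if "\<phi> \<in> set (ctf_atoms C)" for \<phi>
    unfolding comb_append[symmetric] using that assms(1) holds holds' \<open>0 \<le> t\<close> \<open>t \<le> 1\<close>
    by (intro atom_holds_affine_comb[OF _ dims]) (auto simp: ctf_wf_def)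
  \<comment> \<open>The only use of LRA: convex combinations of integer witnesses need not be integral.\<close>
  moreover have "\<forall>i<?q. ?comb z z' $ i \<in> \<int>"
    using \<open>ctf_is_LRA C\<close> unfolding ctf_is_LRA_def by simp
  ultimately show ?thesis
    unfolding ctf_rel_def using uv y y' z z'
    by (intro conjI exI[of _ "?comb y y'"] exI[of _ "?comb z z'"]) auto
qed

lemma convex_transitions_single_vasr_transition:
  assumes "ctf_wf C" "ctf_is_LRA C" "ctf_consistent C"
    and "qvasr_abstraction (ctf_dim C) (ctf_rel C) d S V"
  shows "\<exists>t\<in>V. lin_sim d (ctf_dim C) S (ctf_rel C) (vasr_step d {t})"
proof -
  let ?n = "ctf_dim C"
  have S: "S \<in> carrier_mat d ?n" and "finite V"
    and sim: "lin_sim d ?n S (ctf_rel C) (vasr_step d V)"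
    using assms(4) unfolding qvasr_abstraction_def is_qvasr_def by auto
  define K where "K = {(u, v). ctf_rel C u v}"
  define line where "line p q \<tau> = (affine_comb \<tau> (fst p) (fst q), affine_comb \<tau> (snd p) (snd q))"
    for p q :: "rat vec \<times> rat vec" and \<tau>
  define A where "A t p = vasr_step d {t} (S *\<^sub>v fst p) (S *\<^sub>v snd p)" for t p
  have K_carrier: "fst p \<in> carrier_vec ?n" "snd p \<in> carrier_vec ?n" if "p \<in> K" for p
    using that unfolding K_def ctf_rel_def by auto
  have "\<exists>t\<in>V. \<forall>p\<in>K. A t p"
  proof (rule finite_line_closed_cover_single[where line = line])
    show "line p q \<tau> \<in> K" if "p \<in> K" "q \<in> K" "0 \<le> \<tau>" "\<tau> \<le> 1" for p q \<tau>
      using that ctf_rel_affine_comb[OF assms(1,2)] unfolding K_def line_def by auto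
    show "line p q 0 = p" "line p q 1 = q" if "p \<in> K" "q \<in> K" for p q
      using K_carrier[OF that(1)] K_carrier[OF that(2)] unfolding line_def by auto
    show "A t (line p q \<tau>)"
      if "p \<in> K" "q \<in> K" "\<sigma> \<noteq> \<rho>" "A t (line p q \<sigma>)" "A t (line p q \<rho>)" for t p q \<sigma> \<rho> \<tau>
      using vasr_step_singleton_image_line_closed[OF S K_carrier[OF that(1)] K_carrier[OF that(2)]
          that(4,5)[unfolded A_def line_def fst_conv snd_conv] that(3)]
      unfolding A_def line_def fst_conv snd_conv .
    show "K \<noteq> {}"
      using assms(3) unfolding ctf_consistent_def K_def by auto
    show "\<forall>p\<in>K. \<exists>t\<in>V. A t p"
    proof
      fix p assume "p \<in> K"
      then have "vasr_step d V (S *\<^sub>v fst p) (S *\<^sub>v snd p)"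
        using sim unfolding lin_sim_def K_def by auto
      then show "\<exists>t\<in>V. A t p"
        unfolding A_def by (blast elim: vasr_step_singletonE)
    qed
  qed (use \<open>finite V\<close> in simp)
  then obtain t where "t \<in> V" "\<forall>p\<in>K. A t p" ..
  then show ?thesis
    using S unfolding lin_sim_def K_def A_def by fastforce
qed

lemma alpha_hatE:
  assumes "alpha_hat C d S V"
  obtains bR bI a where "is_basis_of (ctf_dim C) (Res C) bR" "is_basis_of (ctf_dim C) (Inc C) bI"
    and "d = length bR + length bI" and "S \<in> carrier_mat d (ctf_dim C)"
    and "\<And>k. k < d \<Longrightarrow> row S k = fst ((bR @ bI) ! k)"
    and "a \<in> carrier_vec d" and "\<And>k. k < d \<Longrightarrow> a $ k = snd ((bR @ bI) ! k)"
    and "V = {(vec d (\<lambda>k. if k < length bR then 0 else 1), a)}"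
proof -
  let ?n = "ctf_dim C"
  obtain bR bI where bR: "is_basis_of ?n (Res C) bR" and bI: "is_basis_of ?n (Inc C) bI"
    and d: "d = length bR + length bI" and S: "S = mat_of_rows ?n (map fst (bR @ bI))"
    and V: "V = {(vec d (\<lambda>k. if k < length bR then 0 else 1), vec_of_list (map snd (bR @ bI)))}"
    using assms unfolding alpha_hat_def by blast
  have "set (bR @ bI) \<subseteq> Res C \<union> Inc C"
    using bR bI unfolding is_basis_of_def by auto
  then have rows: "fst p \<in> carrier_vec ?n" if "p \<in> set (bR @ bI)" for p
    using that unfolding Res_def Inc_def by auto
  have row_S: "row S k = fst ((bR @ bI) ! k)" if "k < d" for k
  proof -
    have "fst ((bR @ bI) ! k) \<in> carrier_vec ?n"
      using rows[OF nth_mem, of k] that d by simp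
    with that d show ?thesis
      unfolding S by (simp del: map_append)
  qed
  let ?a = "vec_of_list (map snd (bR @ bI))"
  have "?a \<in> carrier_vec d" "\<And>k. k < d \<Longrightarrow> ?a $ k = snd ((bR @ bI) ! k)"
    using d by (simp_all add: carrier_vecI vec_of_list_index del: map_append)
  moreover have "S \<in> carrier_mat d ?n"
    using mat_of_rows_carrier(1)[of ?n "map fst (bR @ bI)"] unfolding S d by simp
  ultimately show thesis
    using that[OF bR bI d _ row_S] V by blast
qed

lemma alpha_hat_abstraction:
  assumes "alpha_hat C d S V"
  shows "qvasr_abstraction (ctf_dim C) (ctf_rel C) d S V"
proof -
  obtain bR bI a where bR: "is_basis_of (ctf_dim C) (Res C) bR" and bI: "is_basis_of (ctf_dim C) (Inc C) bI"
    and d: "d = length bR + length bI" and S: "S \<in> carrier_mat d (ctf_dim C)"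
    and row_S: "\<And>k. k < d \<Longrightarrow> row S k = fst ((bR @ bI) ! k)"
    and a: "a \<in> carrier_vec d" "\<And>k. k < d \<Longrightarrow> a $ k = snd ((bR @ bI) ! k)"
    and V: "V = {(vec d (\<lambda>k. if k < length bR then 0 else 1), a)}"
    by (fact alpha_hatE[OF assms])
  let ?r = "vec d (\<lambda>k. if k < length bR then 0 else 1) :: rat vec"
  have "vasr_step d V (S *\<^sub>v u) (S *\<^sub>v v)" if "ctf_rel C u v" for u v
  proof -
    have "(S *\<^sub>v v) $ k = ?r $ k * (S *\<^sub>v u) $ k + a $ k" if "k < d" for k
    proof (cases "k < length bR")
      case True
      then have "(bR @ bI) ! k \<in> Res C"
        using bR unfolding is_basis_of_def by (auto simp: nth_append)
      with \<open>ctf_rel C u v\<close> True \<open>k < d\<close> S show ?thesis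
        by (auto simp: Res_def row_S a)
    next
      case False
      then have "(bR @ bI) ! k \<in> Inc C"
        using bI \<open>k < d\<close> d unfolding is_basis_of_def by (auto simp: nth_append)
      with \<open>ctf_rel C u v\<close> False \<open>k < d\<close> S show ?thesis
        by (auto simp: Inc_def row_S a)
    qed
    with S a show ?thesis
      unfolding V vasr_step_singleton_iff by (auto intro: carrier_vecI)
  qed
  moreover have "is_qvasr d V"
    using a unfolding V is_qvasr_def by auto
  ultimately show ?thesis
    using S unfolding qvasr_abstraction_def lin_sim_def by blast
qed

lemma abs_le_singleton_of_coords:
  assumes S: "S \<in> carrier_mat d n" and row_S: "\<And>k. k < d \<Longrightarrow> row S k = fst (bs ! k)"
    and "length bs = d" and a: "a \<in> carrier_vec d" "\<And>k. k < d \<Longrightarrow> a $ k = snd (bs ! k)"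
    and S': "S' \<in> carrier_mat d' n" and "(r', a') \<in> V'" and a': "a' \<in> carrier_vec d'"
    and c: "\<And>i. i < d' \<Longrightarrow> has_coords n bs (c i) (row S' i, a' $ i)"
    and c_support: "\<And>i k. i < d' \<Longrightarrow> k < d \<Longrightarrow> c i k * r $ k = r' $ i * c i k"
  shows "abs_le d S {(r, a)} d' S' V'"
proof -
  define T where "T = mat d' d (\<lambda>(i, k). c i k)"
  have T: "T \<in> carrier_mat d' d"
    by (simp add: T_def)
  have row_T: "row T i \<bullet> w = (\<Sum>k<d. c i k * w $ k)" if "i < d'" "w \<in> carrier_vec d" for i w
    using that by (simp add: T_def scalar_prod_def atLeast0LessThan)
  have "T * S = S'"
  proof (rule eq_matI)
    fix i j assume "i < dim_row S'" "j < dim_col S'"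
    then have i: "i < d'" and j: "j < n"
      using S' by auto
    have "col S j \<in> carrier_vec d" "\<And>k. k < d \<Longrightarrow> col S j $ k = fst (bs ! k) $ j"
      using S j by (auto simp flip: row_S)
    then have "(T * S) $$ (i, j) = (\<Sum>k<d. c i k * fst (bs ! k) $ j)"
      using T S i j by (simp add: row_T[OF i])
    also have "\<dots> = S' $$ (i, j)"
      using c[OF i] i j S' \<open>length bs = d\<close> unfolding has_coords_def by simp
    finally show "(T * S) $$ (i, j) = S' $$ (i, j)" .
  qed (use T S S' in auto)
  moreover have "lin_sim d' d T (vasr_step d {(r, a)}) (vasr_step d' V')"
  proof (rule lin_sim_vasr_singleton[OF T a(1) \<open>(r', a') \<in> V'\<close> a'])
    show "row T i \<bullet> a = a' $ i" if "i < d'" for i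
      using c[OF that] row_T[OF that a(1)] a(2) \<open>length bs = d\<close> unfolding has_coords_def by simp
    show "T $$ (i, k) * r $ k = r' $ i * T $$ (i, k)" if "i < d'" "k < d" for i k
      using c_support[OF that] that by (simp add: T_def)
  qed
  ultimately show ?thesis
    unfolding abs_le_def by blast
qed

lemma alpha_hat_abs_le:
  assumes "alpha_hat C d S V" and ab: "qvasr_abstraction (ctf_dim C) (ctf_rel C) d' S' V'"
    and "(r', a') \<in> V'" and sim: "lin_sim d' (ctf_dim C) S' (ctf_rel C) (vasr_step d' {(r', a')})"
  shows "abs_le d S V d' S' V'"
proof -
  let ?n = "ctf_dim C"
  obtain bR bI a where bR: "is_basis_of ?n (Res C) bR" and bI: "is_basis_of ?n (Inc C) bI"
    and d: "d = length bR + length bI" and S: "S \<in> carrier_mat d ?n"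
    and row_S: "\<And>k. k < d \<Longrightarrow> row S k = fst ((bR @ bI) ! k)"
    and a: "a \<in> carrier_vec d" "\<And>k. k < d \<Longrightarrow> a $ k = snd ((bR @ bI) ! k)"
    and V: "V = {(vec d (\<lambda>k. if k < length bR then 0 else 1), a)}"
    by (fact alpha_hatE[OF assms(1)])
  let ?r = "vec d (\<lambda>k. if k < length bR then 0 else 1) :: rat vec"
  have S': "S' \<in> carrier_mat d' ?n" and a': "a' \<in> carrier_vec d'"
    and r': "\<And>i. i < d' \<Longrightarrow> r' $ i = 0 \<or> r' $ i = 1"
    using ab \<open>(r', a') \<in> V'\<close> unfolding qvasr_abstraction_def is_qvasr_def by auto
  have row_S': "row S' i \<bullet> v = r' $ i * (row S' i \<bullet> u) + a' $ i" if "ctf_rel C u v" "i < d'" for u v i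
    using lin_sim_singleton_row[OF sim that] .
  have "\<exists>c. has_coords ?n (bR @ bI) c (row S' i, a' $ i) \<and> (\<forall>k<d. c k * ?r $ k = r' $ i * c k)"
    if i: "i < d'" for i
  proof (cases "r' $ i = 0")
    case True
    with row_S' i S' have "(row S' i, a' $ i) \<in> Res C"
      unfolding Res_def by simp
    then obtain c where "has_coords ?n bR c (row S' i, a' $ i)"
      using is_basis_of_has_coords[OF bR] by blast
    with True show ?thesis
      by (intro exI[of _ "\<lambda>k. if k < length bR then c k else 0"] conjI has_coords_append_left) simp_all
  next
    case False
    with r' i have "r' $ i = 1"
      by blast
    with row_S' i S' have "(row S' i, a' $ i) \<in> Inc C"
      unfolding Inc_def by simp
    then obtain c where "has_coords ?n bI c (row S' i, a' $ i)"
      using is_basis_of_has_coords[OF bI] by blast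
    with \<open>r' $ i = 1\<close> show ?thesis
      by (intro exI[of _ "\<lambda>k. if k < length bR then 0 else c (k - length bR)"] conjI
          has_coords_append_right) simp_all
  qed
  then obtain c where c: "\<And>i. i < d' \<Longrightarrow> has_coords ?n (bR @ bI) (c i) (row S' i, a' $ i)"
    and c_support: "\<And>i k. i < d' \<Longrightarrow> k < d \<Longrightarrow> c i k * ?r $ k = r' $ i * c i k"
    by metis
  have "length (bR @ bI) = d"
    using d by simp
  from abs_le_singleton_of_coords[OF S row_S this a S' \<open>(r', a') \<in> V'\<close> a' c c_support]
  show ?thesis
    unfolding V .
qed

theorem proposition1:
  assumes "ctf_wf C" and "ctf_consistent C"
  shows "(\<forall>d S V. alpha_hat C d S V \<longrightarrow>
            qvasr_abstraction (ctf_dim C) (ctf_rel C) d S V) \<and>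
         (ctf_is_LRA C \<longrightarrow> (\<forall>d S V. alpha_hat C d S V \<longrightarrow>
            best_qvasr_abstraction (ctf_dim C) (ctf_rel C) d S V))"
proof (intro conjI allI impI)
  fix d S V
  assume "alpha_hat C d S V"
  then show "qvasr_abstraction (ctf_dim C) (ctf_rel C) d S V"
    by (rule alpha_hat_abstraction)
next
  fix d S V
  assume "ctf_is_LRA C" and ah: "alpha_hat C d S V"
  have "abs_le d S V d' S' V'" if ab: "qvasr_abstraction (ctf_dim C) (ctf_rel C) d' S' V'" for d' S' V'
  proof -
    obtain t where "t \<in> V'" and "lin_sim d' (ctf_dim C) S' (ctf_rel C) (vasr_step d' {t})"
      using convex_transitions_single_vasr_transition[OF assms(1) \<open>ctf_is_LRA C\<close> assms(2) ab] ..
    then show ?thesis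
      using alpha_hat_abs_le[OF ah ab] by (cases t) blast
  qed
  with alpha_hat_abstraction[OF ah] show "best_qvasr_abstraction (ctf_dim C) (ctf_rel C) d S V"
    unfolding best_qvasr_abstraction_def by blast
qed

end
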